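(* Let $p$ be an admissible linear order on $\mathcal A$ and let $a,b\in L_e$ with $a<b$ such that no letter of $\mathcal A$ lies strictly between $a$ and $b$. For every word $w\in\mathcal A^n$, $$\rho\bigl(d_w(w_{a,b})\bigr)\le\rho(w_{a,b}).$$
   Context: Alphabet: $\mathcal A=L_e\sqcup L_o\sqcup G$ where $L_e=\{x_1,x_2,\dots\}$, $L_o=\{y_1,y_2,\dots\}$ are discrete and $G$ is identified with an interval of $\mathbb R$. An admissible order is a linear order $p$ on $\mathcal A$ for which $G$ is an interval and whose restriction to $G$ is the usual order of reals or its reverse. Generalised RSK (row insertion) w.r.t. $p$: to insert a letter $x$ into a tableau $T$: in the first row, if $x\in L_e$ find the leftmost entry strictly greater than $x$; if $x\in L_o\cup G$ find the leftmost entry greater than or equal to $x$; if there is none, append $x$ at the end of the row and stop; otherwise $x$ replaces that entry and the replaced entry is inserted into the second row by the same rule, and so on. For $w=z_1\cdots z_n$, $R(w)$ is obtained by inserting $z_1,\dots,z_n$ successively into the empty tableau. $w_{a,b}$ is the word obtained from $w$ by deleting all letters other than $a$ and $b$. The possible transformation $d_w(w_{a,b})$ is the word formed as follows: run the insertion of $z_1,\dots,z_n$ and write down the letters $a$ and $b$ in the order in which they are bumped out of the first row; then append the letters $a$, $b$ that remain in the first row of $R(w)$ at the end (in their order in that row). For a word $u$ in the letters $a,b$, its result $\rho(u)$ is the maximum, over all suffixes $u_k u_{k+1}\cdots u_N$ of $u=u_1\cdots u_N$ (including the empty suffix), of (number of $b$'s in the suffix) minus (number of $a$'s in the suffix). 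*)

theory Defs
  imports Complex_Main
begin

text \<open>Letters: LE n are the letters x_n of L_e, LO n the letters y_n of L_o,
  LG r the letters of G (identified with reals r in an interval Gs).\<close>
datatype letter = LE nat | LO nat | LG real

definition is_LE :: "letter \<Rightarrow> bool" where
  "is_LE c \<longleftrightarrow> (\<exists>n. c = LE n)"

definition alph :: "real set \<Rightarrow> letter set" where
  "alph Gs = range LE \<union> range LO \<union> LG ` Gs"

definition real_interval :: "real set \<Rightarrow> bool" where
  "real_interval S \<longleftrightarrow> (\<forall>x\<in>S. \<forall>z\<in>S. \<forall>y. x \<le> y \<and> y \<le> z \<longrightarrow> y \<in> S)"

text \<open>The order p, given by its (non-strict) comparison le.\<close>
definition lt :: "(letter \<Rightarrow> letter \<Rightarrow> bool) \<Rightarrow> letter \<Rightarrow> letter \<Rightarrow> bool" where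
  "lt le x y \<longleftrightarrow> le x y \<and> x \<noteq> y"

definition linear_on :: "letter set \<Rightarrow> (letter \<Rightarrow> letter \<Rightarrow> bool) \<Rightarrow> bool" where
  "linear_on A le \<longleftrightarrow>
     (\<forall>x\<in>A. le x x) \<and>
     (\<forall>x\<in>A. \<forall>y\<in>A. le x y \<and> le y x \<longrightarrow> x = y) \<and>
     (\<forall>x\<in>A. \<forall>y\<in>A. \<forall>z\<in>A. le x y \<and> le y z \<longrightarrow> le x z) \<and>
     (\<forall>x\<in>A. \<forall>y\<in>A. le x y \<or> le y x)"

definition admissible :: "real set \<Rightarrow> (letter \<Rightarrow> letter \<Rightarrow> bool) \<Rightarrow> bool" where
  "admissible Gs le \<longleftrightarrow>
     real_interval Gs \<and>
     linear_on (alph Gs) le \<and>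
     (\<forall>r\<in>Gs. \<forall>s\<in>Gs. \<forall>c\<in>alph Gs. le (LG r) c \<and> le c (LG s) \<longrightarrow> c \<in> LG ` Gs) \<and>
     ((\<forall>r\<in>Gs. \<forall>s\<in>Gs. le (LG r) (LG s) \<longleftrightarrow> r \<le> s) \<or>
      (\<forall>r\<in>Gs. \<forall>s\<in>Gs. le (LG r) (LG s) \<longleftrightarrow> s \<le> r))"

fun bump :: "(letter \<Rightarrow> letter \<Rightarrow> bool) \<Rightarrow> letter \<Rightarrow> letter list \<Rightarrow> letter list \<times> letter option" where
  "bump le x [] = ([x], None)"
| "bump le x (y # ys) =
     (if (if is_LE x then lt le x y else le x y) then (x # ys, Some y)
      else (let (r, z) = bump le x ys in (y # r, z)))"

fun ins :: "(letter \<Rightarrow> letter \<Rightarrow> bool) \<Rightarrow> letter \<Rightarrow> letter list list \<Rightarrow> letter list list" where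
  "ins le x [] = [[x]]"
| "ins le x (r # rs) =
     (case bump le x r of
        (r', None) \<Rightarrow> r' # rs
      | (r', Some y) \<Rightarrow> r' # ins le y rs)"

definition rsk :: "(letter \<Rightarrow> letter \<Rightarrow> bool) \<Rightarrow> letter list \<Rightarrow> letter list list" where
  "rsk le w = fold (ins le) w []"

fun first_row_bumps :: "(letter \<Rightarrow> letter \<Rightarrow> bool) \<Rightarrow> letter list \<Rightarrow> letter list list \<Rightarrow> letter list" where
  "first_row_bumps le [] T = []"
| "first_row_bumps le (x # xs) T =
     (case T of [] \<Rightarrow> []
      | r # _ \<Rightarrow> (case snd (bump le x r) of None \<Rightarrow> [] | Some y \<Rightarrow> [y]))
     @ first_row_bumps le xs (ins le x T)"

definition first_row :: "letter list list \<Rightarrow> letter list" where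
  "first_row T = (case T of [] \<Rightarrow> [] | r # _ \<Rightarrow> r)"

definition restr :: "letter \<Rightarrow> letter \<Rightarrow> letter list \<Rightarrow> letter list" where
  "restr a b w = filter (\<lambda>c. c = a \<or> c = b) w"

definition dw :: "(letter \<Rightarrow> letter \<Rightarrow> bool) \<Rightarrow> letter \<Rightarrow> letter \<Rightarrow> letter list \<Rightarrow> letter list" where
  "dw le a b w = restr a b (first_row_bumps le w []) @ restr a b (first_row (rsk le w))"

definition cnt :: "letter \<Rightarrow> letter list \<Rightarrow> int" where
  "cnt c u = int (length (filter (\<lambda>d. d = c) u))"

definition rho :: "letter \<Rightarrow> letter \<Rightarrow> letter list \<Rightarrow> int" where
  "rho a b u = Max ((\<lambda>k. cnt b (drop k u) - cnt a (drop k u)) ` {0..length u})"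

end

theory Submission
  imports Defs
begin

(* Every letter that leaves the first row of a tableau under row insertion
   never comes back to it, and the first row evolves by plain one-row insertion; hence
   d_w(w_{a,b}) is the restriction to a, b of (letters bumped out of a single row) followed
   by (final contents of that row).
   The quantity rho is a left fold: appending c changes rho u to rho u + 1 if c = b, to
   max 0 (rho u - 1) if c = a, and leaves it unchanged otherwise.  Thus rho (u @ s) depends
   on u only through rho u, and moreover rho (u @ [b, a]) = rho u.
   Because a < b are adjacent letters of L_e, the a's and b's of the first row always form a
   block a^i b^j lying before every letter above b.  Inserting one letter x then acts on
   (bumped word, restricted row) as follows: a letter other than a, b merely moves letters
   from the row to the bumped word, b is appended to the row, and a turns a^i b^j into
   a^(i+1) b^(j-1) while emitting a b if j > 0.  In each case rho of the concatenation
   (bumped word @ restricted row) changes exactly as rho of the restricted input word does.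
   By induction over w we obtain even the equality rho (d_w(w_{a,b})) = rho (w_{a,b}),
   from which the theorem follows. *)

section \<open>Insertion into a single row\<close>

definition displaces :: "(letter \<Rightarrow> letter \<Rightarrow> bool) \<Rightarrow> letter \<Rightarrow> letter \<Rightarrow> bool" where
  "displaces le x y = (if is_LE x then lt le x y else le x y)"

lemma bump_Cons_row:
  "fst (bump le x (y # ys)) = (if displaces le x y then x # ys else y # fst (bump le x ys))"
  by (simp add: displaces_def split_beta)

lemma bump_Cons_out:
  "snd (bump le x (y # ys)) = (if displaces le x y then Some y else snd (bump le x ys))"
  by (simp add: displaces_def split_beta)

lemma bump_Nil_row_out: "fst (bump le x []) = [x]" "snd (bump le x []) = None"
  by simp_all

declare bump.simps [simp del] bump_Nil_row_out [simp]

lemma bump_out_displaced: "snd (bump le x r) = Some z \<Longrightarrow> displaces le x z"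
  by (induction r) (auto simp: bump_Cons_out split: if_splits)

lemma set_bump_row: "set (fst (bump le x r)) \<subseteq> insert x (set r)"
  by (induction r) (auto simp: bump_Cons_row)

definition opt_list :: "'a option \<Rightarrow> 'a list" where
  "opt_list z = (case z of None \<Rightarrow> [] | Some y \<Rightarrow> [y])"

definition row_insert :: "(letter \<Rightarrow> letter \<Rightarrow> bool) \<Rightarrow> letter \<Rightarrow> letter list \<Rightarrow> letter list" where
  "row_insert le x r = fst (bump le x r)"

fun row_bumps :: "(letter \<Rightarrow> letter \<Rightarrow> bool) \<Rightarrow> letter list \<Rightarrow> letter list \<Rightarrow> letter list" where
  "row_bumps le [] r = []"
| "row_bumps le (x # xs) r = opt_list (snd (bump le x r)) @ row_bumps le xs (fst (bump le x r))"

section \<open>The first row of a tableau evolves by row insertion\<close>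

text \<open>Only the first row takes part in what happens to the first row: the bumped letter moves on.\<close>
lemma first_row_ins: "first_row (ins le x T) = row_insert le x (first_row T)"
  by (cases T) (auto simp: first_row_def row_insert_def split: option.splits prod.splits)

lemma first_row_fold_ins: "first_row (fold (ins le) w T) = fold (row_insert le) w (first_row T)"
  by (induction w arbitrary: T) (simp_all add: first_row_ins)

lemma first_row_bumps_row: "first_row_bumps le w T = row_bumps le w (first_row T)"
proof (induction w arbitrary: T)
  case Nil
  then show ?case by simp
next
  case (Cons x xs)
  then show ?case using first_row_ins[of le x T]
    by (cases T) (auto simp: first_row_def opt_list_def row_insert_def split: option.splits)
qed

lemma dw_row: "dw le a b w = restr a b (row_bumps le w []) @ restr a b (fold (row_insert le) w [])"
  unfolding dw_def rsk_def first_row_bumps_row first_row_fold_ins by (simp add: first_row_def)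

section \<open>Restriction and the result \<open>rho\<close>\<close>

lemma restr_simps [simp]:
  "restr a b [] = []"
  "restr a b (u @ v) = restr a b u @ restr a b v"
  "restr a b (c # u) = (if c = a \<or> c = b then c # restr a b u else restr a b u)"
  by (simp_all add: restr_def)

lemma restr_none: "a \<notin> set u \<Longrightarrow> b \<notin> set u \<Longrightarrow> restr a b u = []"
  by (induction u) auto

lemma cnt_append [simp]: "cnt c (u @ v) = cnt c u + cnt c v"
  by (simp add: cnt_def)

lemma cnt_Cons: "cnt c (x # u) = (if x = c then 1 else 0) + cnt c u"
  by (simp add: cnt_def)

lemma cnt_Nil [simp]: "cnt c [] = 0"
  by (simp add: cnt_def)

lemma rho_Nil [simp]: "rho a b [] = 0"
  by (simp add: rho_def)

text \<open>The suffixes of c # u are c # u itself and the suffixes of u.\<close>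
lemma rho_Cons: "rho a b (c # u) = max (cnt b (c # u) - cnt a (c # u)) (rho a b u)"
proof -
  have "{0..length (c # u)} = insert 0 (Suc ` {0..length u})"
    by (simp add: atLeast0AtMost atMost_Suc_eq_insert_0)
  then have "(\<lambda>k. cnt b (drop k (c # u)) - cnt a (drop k (c # u))) ` {0..length (c # u)}
     = insert (cnt b (c # u) - cnt a (c # u)) ((\<lambda>k. cnt b (drop k u) - cnt a (drop k u)) ` {0..length u})"
    by (simp only: image_insert image_image drop_Suc_Cons drop_0)
  then show ?thesis
    unfolding rho_def by (simp only: Max_insert finite_imageI finite_atLeastAtMost) auto
qed

lemma rho_snoc: "rho a b (u @ [c]) = max 0 (rho a b u + (cnt b [c] - cnt a [c]))"
  by (induction u) (simp_all add: rho_Cons cnt_Cons)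

lemma rho_nonneg: "0 \<le> rho a b u"
  by (induction u) (auto simp: rho_Cons)

lemma rho_append_cong: "rho a b u = rho a b v \<Longrightarrow> rho a b (u @ s) = rho a b (v @ s)"
proof (induction s rule: rev_induct)
  case Nil
  then show ?case by simp
next
  case (snoc c s)
  then show ?case using rho_snoc[of a b "u @ s" c] rho_snoc[of a b "v @ s" c] by simp
qed

lemma rho_snoc_b_a: "a \<noteq> b \<Longrightarrow> rho a b (u @ [b, a]) = rho a b u"
  using rho_snoc[of a b "u @ [b]" a] rho_snoc[of a b u b] rho_nonneg[of a b u]
  by (simp add: cnt_Cons)

text \<open>The effect on rho of inserting a into a row whose a,b-part is a^i b^j.\<close>
lemma rho_insert_a:
  assumes "a \<noteq> b"
  shows "rho a b (B @ (if j = 0 then [] else [b]) @ replicate (Suc i) a @ replicate (j - 1) b)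
       = rho a b (B @ (replicate i a @ replicate j b) @ [a])"
proof (cases j)
  case 0
  then show ?thesis by (simp add: replicate_append_same)
next
  case (Suc k)
  have "rho a b (B @ [b] @ replicate (Suc i) a @ replicate k b)
      = rho a b ((B @ [b, a]) @ replicate i a @ replicate k b)" by simp
  also have "\<dots> = rho a b (B @ replicate i a @ replicate k b)"
    using rho_append_cong rho_snoc_b_a[OF assms] by blast
  also have "\<dots> = rho a b ((B @ replicate i a @ replicate k b) @ [b, a])"
    using rho_snoc_b_a[OF assms, of "B @ replicate i a @ replicate k b"] by simp
  also have "\<dots> = rho a b (B @ (replicate i a @ replicate (Suc k) b) @ [a])"
    by (simp add: replicate_append_same[symmetric])
  finally show ?thesis using Suc by simp
qed

section \<open>Rows relative to two adjacent letters a < b of L_e\<close>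

fun ab_ordered :: "(letter \<Rightarrow> letter \<Rightarrow> bool) \<Rightarrow> letter \<Rightarrow> letter \<Rightarrow> letter list \<Rightarrow> bool" where
  "ab_ordered le a b [] = True"
| "ab_ordered le a b (c # r) =
     (ab_ordered le a b r \<and> (c = b \<longrightarrow> a \<notin> set r) \<and> (lt le b c \<longrightarrow> a \<notin> set r \<and> b \<notin> set r))"

lemma ab_ordered_shape: "ab_ordered le a b r \<Longrightarrow> \<exists>i j. restr a b r = replicate i a @ replicate j b"
proof (induction r)
  case Nil
  then show ?case by simp
next
  case (Cons c r)
  then obtain i j where ij: "restr a b r = replicate i a @ replicate j b" by auto
  consider "c = a" | "c = b" "c \<noteq> a" | "c \<noteq> a" "c \<noteq> b" by blast
  then show ?case
  proof cases
    case 1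
    then show ?thesis using ij by (metis restr_simps(3) replicate_Suc append_Cons)
  next
    case 2
    then have "a \<notin> set (restr a b r)" using Cons.prems by (simp add: restr_def)
    then have "i = 0" using ij by (cases i) auto
    then show ?thesis using ij 2 by (metis restr_simps(3) replicate_Suc append_Nil replicate_0)
  next
    case 3
    then show ?thesis using ij by auto
  qed
qed

locale adjacent_pair =
  fixes A :: "letter set" and le :: "letter \<Rightarrow> letter \<Rightarrow> bool" and a b :: letter
  assumes lin: "linear_on A le" and a_in: "a \<in> A" and b_in: "b \<in> A"
    and a_LE: "is_LE a" and b_LE: "is_LE b" and a_lt_b: "lt le a b"
    and adjacent: "\<forall>c\<in>A. \<not> (lt le a c \<and> lt le c b)"
begin

lemma antisym: "x \<in> A \<Longrightarrow> y \<in> A \<Longrightarrow> le x y \<Longrightarrow> le y x \<Longrightarrow> x = y"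
  using lin unfolding linear_on_def by blast

lemma trans: "x \<in> A \<Longrightarrow> y \<in> A \<Longrightarrow> z \<in> A \<Longrightarrow> le x y \<Longrightarrow> le y z \<Longrightarrow> le x z"
  using lin unfolding linear_on_def by blast

lemma total: "x \<in> A \<Longrightarrow> y \<in> A \<Longrightarrow> le x y \<or> le y x"
  using lin unfolding linear_on_def by blast

lemma lt_le_trans: "x \<in> A \<Longrightarrow> y \<in> A \<Longrightarrow> z \<in> A \<Longrightarrow> lt le x y \<Longrightarrow> le y z \<Longrightarrow> lt le x z"
  using trans[of x y z] antisym[of x y] by (auto simp: lt_def)

lemma lt_trans: "x \<in> A \<Longrightarrow> y \<in> A \<Longrightarrow> z \<in> A \<Longrightarrow> lt le x y \<Longrightarrow> lt le y z \<Longrightarrow> lt le x z"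
  using lt_le_trans[of x y z] by (simp add: lt_def)

lemma a_neq_b: "a \<noteq> b"
  using a_lt_b by (simp add: lt_def)

lemma not_b_lt_a: "\<not> lt le b a"
  using a_lt_b a_in b_in antisym[of a b] by (auto simp: lt_def)

lemma displaces_a: "displaces le a y = lt le a y"
  using a_LE by (simp add: displaces_def)

lemma displaces_b: "displaces le b y = lt le b y"
  using b_LE by (simp add: displaces_def)

lemma below_or_above: "x \<in> A \<Longrightarrow> x \<noteq> a \<Longrightarrow> x \<noteq> b \<Longrightarrow> lt le x a \<or> lt le b x"
  using total[of x a] total[of x b] adjacent a_in b_in by (auto simp: lt_def)

lemma displaces_from_below: "x \<in> A \<Longrightarrow> lt le x a \<Longrightarrow> displaces le x a \<and> displaces le x b"
  using lt_trans[of x a b] a_lt_b a_in b_in by (simp add: displaces_def lt_def)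

lemma no_displace_from_above: "x \<in> A \<Longrightarrow> lt le b x \<Longrightarrow> \<not> displaces le x a \<and> \<not> displaces le x b"
  using lt_le_trans[of b x a] lt_le_trans[of b x b] not_b_lt_a a_in b_in
  by (auto simp: displaces_def lt_def)

lemma ab_ordered_bump:
  "ab_ordered le a b r \<Longrightarrow> set r \<subseteq> A \<Longrightarrow> x \<in> A \<Longrightarrow> ab_ordered le a b (fst (bump le x r))"
proof (induction r)
  case Nil
  then show ?case by simp
next
  case (Cons y ys)
  show ?case
  proof (cases "displaces le x y")
    case True
    have "x = b \<longrightarrow> a \<notin> set ys" using True Cons.prems by (auto simp: displaces_b)
    moreover have "lt le b y" if "lt le b x"
      using True that Cons.prems lt_trans[of b x y] lt_le_trans[of b x y] b_in
      by (auto simp: displaces_def split: if_splits)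
    ultimately show ?thesis using True Cons.prems by (auto simp: bump_Cons_row)
  next
    case False
    have "y = b \<Longrightarrow> x \<noteq> a" using False a_lt_b by (auto simp: displaces_a)
    moreover have "lt le b y \<Longrightarrow> x \<noteq> a \<and> x \<noteq> b"
      using False a_lt_b a_in b_in Cons.prems lt_trans[of a b y] by (auto simp: displaces_a displaces_b)
    ultimately show ?thesis
      using False Cons set_bump_row[of le x ys] by (auto simp: bump_Cons_row)
  qed
qed

lemma insert_other:
  assumes "x \<in> A" "x \<noteq> a" "x \<noteq> b"
  shows "restr a b (opt_list (snd (bump le x r))) @ restr a b (fst (bump le x r)) = restr a b r"
proof (induction r)
  case Nil
  then show ?case using assms by (simp add: opt_list_def)
next
  case (Cons y ys)
  show ?case
  proof (cases "displaces le x y")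
    case True
    then show ?thesis using assms by (simp add: bump_Cons_row bump_Cons_out opt_list_def)
  next
    case not_displaced: False
    show ?thesis
    proof (cases "y = a \<or> y = b")
      case True
      then have "\<not> lt le x a" using not_displaced displaces_from_below assms by blast
      then have "lt le b x" using below_or_above assms by blast
      then have "restr a b (opt_list (snd (bump le x ys))) = []"
        using no_displace_from_above[OF assms(1)] bump_out_displaced[of le x ys]
        by (auto simp: opt_list_def split: option.splits)
      then show ?thesis using Cons.IH True not_displaced by (simp add: bump_Cons_row bump_Cons_out)
    next
      case False
      then show ?thesis using Cons.IH not_displaced by (simp add: bump_Cons_row bump_Cons_out)
    qed
  qed
qed

lemma insert_b:
  "ab_ordered le a b r \<Longrightarrow> set r \<subseteq> A \<Longrightarrow>
   restr a b (opt_list (snd (bump le b r))) = [] \<and> restr a b (fst (bump le b r)) = restr a b r @ [b]"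
proof (induction r)
  case Nil
  then show ?case by (simp add: opt_list_def)
next
  case (Cons y ys)
  show ?case
  proof (cases "displaces le b y")
    case True
    then have "lt le b y" by (simp add: displaces_b)
    then have "y \<noteq> a" "y \<noteq> b" "a \<notin> set ys" "b \<notin> set ys"
      using not_b_lt_a Cons.prems by (auto simp: lt_def)
    then show ?thesis using True a_neq_b by (simp add: bump_Cons_row bump_Cons_out opt_list_def restr_none)
  next
    case False
    then show ?thesis using Cons by (simp add: bump_Cons_row bump_Cons_out)
  qed
qed

lemma insert_a:
  "ab_ordered le a b r \<Longrightarrow> set r \<subseteq> A \<Longrightarrow> restr a b r = replicate i a @ replicate j b \<Longrightarrow>
   restr a b (opt_list (snd (bump le a r))) = (if j = 0 then [] else [b]) \<and>
   restr a b (fst (bump le a r)) = replicate (Suc i) a @ replicate (j - 1) b"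
proof (induction r arbitrary: i)
  case Nil
  then show ?case by (simp add: opt_list_def)
next
  case (Cons y ys)
  show ?case
  proof (cases "displaces le a y")
    case True
    then have a_y: "lt le a y" by (simp add: displaces_a)
    show ?thesis
    proof (cases "y = b")
      case True
      then have "a \<notin> set (restr a b ys)" using Cons.prems by (simp add: restr_def)
      then have "i = 0" "j \<noteq> 0" "restr a b ys = replicate (j - 1) b"
        using Cons.prems(3) True a_neq_b by (cases i; cases j; auto)+
      then show ?thesis using True a_y by (simp add: bump_Cons_row bump_Cons_out opt_list_def displaces_a)
    next
      case False
      then have "lt le b y"
        using adjacent a_y Cons.prems total[of b y] b_in by (auto simp: lt_def)
      then have "y \<noteq> a" "a \<notin> set ys" "b \<notin> set ys" using a_y Cons.prems by (auto simp: lt_def)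
      then have "i = 0" "j = 0" using Cons.prems(3) False by (simp_all add: restr_none)
      then show ?thesis using a_y \<open>y \<noteq> a\<close> \<open>a \<notin> set ys\<close> \<open>b \<notin> set ys\<close> False
        by (simp add: bump_Cons_row bump_Cons_out opt_list_def displaces_a restr_none)
    qed
  next
    case False
    then have "y \<noteq> b" using a_lt_b by (auto simp: displaces_a)
    show ?thesis
    proof (cases "y = a")
      case True
      then obtain i' where "i = Suc i'" "restr a b ys = replicate i' a @ replicate j b"
        using Cons.prems(3) a_neq_b by (cases i; cases j) auto
      then show ?thesis using Cons False True by (simp add: bump_Cons_row bump_Cons_out)
    next
      case False
      then show ?thesis using Cons \<open>\<not> displaces le a y\<close> \<open>y \<noteq> b\<close> by (simp add: bump_Cons_row bump_Cons_out)
    qed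
  qed
qed

lemma rho_insert:
  assumes x: "x \<in> A" and ord: "ab_ordered le a b r" and r: "set r \<subseteq> A"
  shows "rho a b (B @ restr a b (opt_list (snd (bump le x r))) @ restr a b (fst (bump le x r)))
       = rho a b (B @ restr a b r @ restr a b [x])"
proof -
  consider "x = a" | "x = b" | "x \<noteq> a" "x \<noteq> b" by blast
  then show ?thesis
  proof cases
    case 1
    obtain i j where "restr a b r = replicate i a @ replicate j b"
      using ab_ordered_shape[OF ord] by blast
    then show ?thesis using 1 insert_a[OF ord r] rho_insert_a[OF a_neq_b, of B j i] by simp
  next
    case 2
    then show ?thesis using insert_b[OF ord r] by simp
  next
    case 3
    then show ?thesis using insert_other[OF x] by (simp flip: append_assoc)
  qed
qed

lemma rho_row_bumps:
  "set w \<subseteq> A \<Longrightarrow> ab_ordered le a b r \<Longrightarrow> set r \<subseteq> A \<Longrightarrow>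
   rho a b (B @ restr a b (row_bumps le w r) @ restr a b (fold (row_insert le) w r))
     = rho a b (B @ restr a b r @ restr a b w)"
proof (induction w arbitrary: r B)
  case Nil
  then show ?case by simp
next
  case (Cons x xs)
  let ?r = "fst (bump le x r)" and ?B = "B @ restr a b (opt_list (snd (bump le x r)))"
  have x: "x \<in> A" and xs: "set xs \<subseteq> A" using Cons.prems by auto
  have "ab_ordered le a b ?r" using ab_ordered_bump Cons.prems x by blast
  moreover have "set ?r \<subseteq> A" using set_bump_row[of le x r] Cons.prems x by blast
  ultimately have "rho a b (?B @ restr a b (row_bumps le xs ?r) @ restr a b (fold (row_insert le) xs ?r))
      = rho a b ((?B @ restr a b ?r) @ restr a b xs)"
    using Cons.IH[OF xs, of ?r ?B] by simp
  also have "\<dots> = rho a b ((B @ restr a b r @ restr a b [x]) @ restr a b xs)"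
    using rho_append_cong rho_insert[OF x Cons.prems(2,3)] by (metis append_assoc)
  also have "\<dots> = rho a b (B @ restr a b r @ restr a b (x # xs))"
    by (metis append_Cons append_Nil append_assoc restr_simps(2))
  finally show ?case by (simp del: restr_simps(3) add: row_insert_def[of le x r])
qed

end

theorem lemma5:
  fixes Gs :: "real set" and le :: "letter \<Rightarrow> letter \<Rightarrow> bool"
    and a b :: letter and w :: "letter list"
  assumes "admissible Gs le"
    and "is_LE a" and "is_LE b"
    and "lt le a b"
    and "\<forall>c\<in>alph Gs. \<not> (lt le a c \<and> lt le c b)"
    and "set w \<subseteq> alph Gs"
  shows "rho a b (dw le a b w) \<le> rho a b (restr a b w)"
proof -
  have "a \<in> alph Gs" "b \<in> alph Gs" using assms(2,3) by (auto simp: is_LE_def alph_def)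
  then interpret adjacent_pair "alph Gs" le a b
    using assms by unfold_locales (auto simp: admissible_def)
  have "rho a b (dw le a b w) = rho a b ([] @ restr a b (row_bumps le w []) @ restr a b (fold (row_insert le) w []))"
    by (simp add: dw_row)
  also have "\<dots> = rho a b (restr a b w)"
    using rho_row_bumps[of w "[]" "[]"] assms(6) by simp
  finally show ?thesis by simp
qed

end
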